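(* In the oligopoly game below, there exists an equilibrium $(\mathbf A^{\rm d},\mathbf q^{\rm d})$ with $$\mathbf A^{\rm d}\mathbf q^{\rm d}=\boldsymbol\beta,\qquad \mathbf q^{\rm d}=\frac{\boldsymbol\gamma}{2+\alpha}$$ if and only if $r(\boldsymbol\gamma)\le 2+\alpha\le R(\boldsymbol\gamma)$.
   Context: Model: integers $n\ge2$, $m\ge2$; $\alpha>0$, $\boldsymbol\beta\in\mathbb R^m$ with $\|\boldsymbol\beta\|_2=1$, $\boldsymbol\gamma\in\mathbb R^n$ with all $\gamma_i>0$. $\mathcal A$ is the set of real $m\times n$ matrices $\mathbf A=[\mathbf a_1,\dots,\mathbf a_n]$ with all $\|\mathbf a_i\|_2=1$. Firm $i$ chooses a unit vector $\mathbf a_i\in\mathbb R^m$ and $q_i\ge0$, earning $\Pi_i=\alpha q_i\mathbf a_i^\top(\boldsymbol\beta-\sum_{j\ne i}q_j\mathbf a_j)-(1+\alpha)q_i^2+\gamma_iq_i$. An equilibrium is $(\mathbf A^*,\mathbf q^* )$ in which each $(\mathbf a_i^*,q_i^* )$ maximizes $\Pi_i$ given the others' choices. $R(\mathbf v)=\|\mathbf v\|_1$, $r(\mathbf v)=2\|\mathbf v\|_\infty-\|\mathbf v\|_1$. *)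

theory Defs
  imports "HOL-Analysis.Analysis"
begin

text \<open>Firms are indexed by the finite type 'n (n = CARD('n)), the product space is
  real^'m (m = CARD('m)). A matrix A :: real^'n^'m has columns a_i = column i A.\<close>

definition profit :: "real \<Rightarrow> real^'m \<Rightarrow> real^'n \<Rightarrow> real^'n^'m \<Rightarrow> real^'n \<Rightarrow> 'n \<Rightarrow> real^'m \<Rightarrow> real \<Rightarrow> real" where
  "profit \<alpha> \<beta> \<gamma> A q i a x =
     \<alpha> * x * (a \<bullet> (\<beta> - (\<Sum>j\<in>UNIV - {i}. (q $ j) *\<^sub>R column j A)))
     - (1 + \<alpha>) * x\<^sup>2 + \<gamma> $ i * x"

definition unit_cols :: "real^'n^'m \<Rightarrow> bool" where
  "unit_cols A \<longleftrightarrow> (\<forall>i. norm (column i A) = 1)"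

definition is_equilibrium :: "real \<Rightarrow> real^'m \<Rightarrow> real^'n \<Rightarrow> real^'n^'m \<Rightarrow> real^'n \<Rightarrow> bool" where
  "is_equilibrium \<alpha> \<beta> \<gamma> A q \<longleftrightarrow>
     unit_cols A \<and> (\<forall>i. q $ i \<ge> 0) \<and>
     (\<forall>i a x. norm a = 1 \<longrightarrow> x \<ge> 0 \<longrightarrow>
        profit \<alpha> \<beta> \<gamma> A q i a x \<le> profit \<alpha> \<beta> \<gamma> A q i (column i A) (q $ i))"

definition R_norm :: "real^'n \<Rightarrow> real" where
  "R_norm v = (\<Sum>i\<in>UNIV. \<bar>v $ i\<bar>)"

definition r_fun :: "real^'n \<Rightarrow> real" where
  "r_fun v = 2 * Max (range (\<lambda>i. \<bar>v $ i\<bar>)) - R_norm v"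

end

theory Submission
  imports Defs
begin

text \<open>With \<open>q = \<gamma> / (2 + \<alpha>)\<close> and \<open>A q = \<beta>\<close>, the residual demand
  \<open>\<beta> - (\<Sum>j\<noteq>i. q\<^sub>j a\<^sub>j)\<close> of firm \<open>i\<close> is \<open>q\<^sub>i a\<^sub>i\<close>, and then \<open>(a\<^sub>i, q\<^sub>i)\<close>
  is a best response by Cauchy-Schwarz and completing the square, whatever the unit columns are.
  So the equilibrium exists iff \<open>\<beta>\<close> is a combination \<open>\<Sum>i. q\<^sub>i a\<^sub>i\<close> of unit vectors, i.e.
  iff sides of lengths \<open>q\<^sub>1, \<dots>, q\<^sub>n\<close> and \<open>\<parallel>\<beta>\<parallel> = 1\<close> close up into a polygon.
  This happens iff \<open>1 \<le> \<Sum>i. q\<^sub>i\<close> and no \<open>q\<^sub>k\<close> exceeds \<open>1 + (\<Sum>j\<noteq>k. q\<^sub>j)\<close>, which after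
  scaling by \<open>2 + \<alpha>\<close> are the two inequalities for \<open>R \<gamma>\<close> and \<open>r \<gamma>\<close>. The polygon is built
  one side at a time: as the unit sphere is connected in dimension \<open>\<ge> 2\<close>, the length
  \<open>\<parallel>b - p w\<parallel>\<close> takes every value between \<open>\<bar>\<parallel>b\<parallel> - p\<bar>\<close> and \<open>\<parallel>b\<parallel> + p\<close> as \<open>w\<close> runs
  over it.\<close>

lemma exists_unit_vector_norm_diff_eq:
  fixes b :: "'a::euclidean_space"
  assumes "2 \<le> DIM('a)" "0 \<le> p" "\<bar>norm b - p\<bar> \<le> \<rho>" "\<rho> \<le> norm b + p"
  obtains w where "norm w = 1" "norm (b - p *\<^sub>R w) = \<rho>"
proof -
  obtain u :: 'a where u: "norm u = 1" "b = norm b *\<^sub>R u"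
  proof (cases "b = 0")
    case True
    obtain u :: 'a where "norm u = 1" using vector_choose_size zero_le_one by blast
    with True that show ?thesis by simp
  next
    case False
    then show ?thesis using that[of "b /\<^sub>R norm b"] by simp
  qed
  let ?f = "\<lambda>w. norm (b - p *\<^sub>R w)"
  have "b - p *\<^sub>R u = (norm b - p) *\<^sub>R u" by (subst u(2)) (simp add: scaleR_diff_left)
  then have f_u: "?f u = \<bar>norm b - p\<bar>" using u(1) by simp
  have "b - p *\<^sub>R - u = (norm b + p) *\<^sub>R u" by (subst u(2)) (simp add: scaleR_add_left)
  then have f_minus_u: "?f (- u) = norm b + p" using u(1) assms(2) by simp
  have "connected (?f ` sphere 0 1)"
    by (rule connected_continuous_image) (intro continuous_intros, rule connected_sphere[OF assms(1)])
  moreover have "?f u \<in> ?f ` sphere 0 1" "?f (- u) \<in> ?f ` sphere 0 1"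
    using u(1) by (intro imageI; simp)+
  ultimately have "\<rho> \<in> ?f ` sphere 0 1"
    by (rule connectedD_interval) (simp_all only: f_u f_minus_u assms(3,4))
  then show ?thesis using that by auto
qed

lemma sum_unit_vectors_polygon_inequalities:
  fixes z :: "'i \<Rightarrow> 'a::real_normed_vector"
  assumes "finite I" "\<forall>i\<in>I. 0 \<le> q i" "\<forall>i\<in>I. norm (z i) = 1"
    and b: "(\<Sum>i\<in>I. q i *\<^sub>R z i) = b"
  shows "norm b \<le> sum q I" "\<forall>k\<in>I. 2 * q k - sum q I \<le> norm b"
proof -
  have norm_terms: "norm (q i *\<^sub>R z i) = q i" if "i \<in> I" for i
    using assms(2,3) that by simp
  show "norm b \<le> sum q I"
    using norm_sum[of "\<lambda>i. q i *\<^sub>R z i" I] norm_terms b by simp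
  show "\<forall>k\<in>I. 2 * q k - sum q I \<le> norm b"
  proof
    fix k assume k: "k \<in> I"
    have "q k *\<^sub>R z k = b - (\<Sum>i\<in>I - {k}. q i *\<^sub>R z i)"
      using b by (simp add: sum.remove[OF assms(1) k] algebra_simps)
    then have "q k = norm (b - (\<Sum>i\<in>I - {k}. q i *\<^sub>R z i))"
      using norm_terms[OF k] by simp
    also have "\<dots> \<le> norm b + (\<Sum>i\<in>I - {k}. norm (q i *\<^sub>R z i))"
      using norm_triangle_ineq4[of b] norm_sum[of "\<lambda>i. q i *\<^sub>R z i" "I - {k}"]
      by (meson add_left_mono order_trans)
    also have "\<dots> = norm b + sum q I - q k"
      using norm_terms by (simp add: sum_diff1 assms(1) k)
    finally show "2 * q k - sum q I \<le> norm b" by simp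
  qed
qed

lemma exists_unit_vectors_sum_eq:
  fixes b :: "'a::euclidean_space"
  assumes "2 \<le> DIM('a)" "finite I" "\<forall>i\<in>I. 0 \<le> q i"
    and "norm b \<le> sum q I" "\<forall>k\<in>I. 2 * q k - sum q I \<le> norm b"
  shows "\<exists>z. (\<forall>i\<in>I. norm (z i) = 1) \<and> (\<Sum>i\<in>I. q i *\<^sub>R z i) = b"
  using assms(2-)
proof (induction I arbitrary: b rule: finite_induct)
  case empty
  then show ?case by simp
next
  case (insert x F)
  let ?S = "sum q F"
  have q_nonneg: "\<And>i. i \<in> F \<Longrightarrow> 0 \<le> q i" "0 \<le> q x" using insert.prems(1) by simp_all
  have sum_insert: "sum q (insert x F) = q x + ?S" using insert.hyps by simp
  have q_le_S: "q k \<le> ?S" if "k \<in> F" for k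
    by (rule member_le_sum[OF that]) (simp_all add: q_nonneg(1) insert.hyps(1))
  have "norm b \<le> q x + ?S" "q x - ?S \<le> norm b" "0 \<le> ?S"
    using insert.prems(2,3) sum_insert sum_nonneg[OF q_nonneg(1)] by auto
  \<comment> \<open>the length still to be covered by the sides in \<open>F\<close>; it has to satisfy the
    triangle inequalities with \<open>norm b\<close> and \<open>q x\<close> and the polygon inequalities for \<open>F\<close>\<close>
  define \<rho> where "\<rho> = min ?S (norm b + q x)"
  then have "\<bar>norm b - q x\<bar> \<le> \<rho>" "\<rho> \<le> norm b + q x"
    using \<open>norm b \<le> q x + ?S\<close> \<open>q x - ?S \<le> norm b\<close> \<open>0 \<le> ?S\<close> q_nonneg(2) norm_ge_zero[of b] by arith+
  then obtain w where w: "norm w = 1" "norm (b - q x *\<^sub>R w) = \<rho>"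
    using exists_unit_vector_norm_diff_eq[OF assms(1) q_nonneg(2)] by blast
  have "norm (b - q x *\<^sub>R w) \<le> ?S" "\<forall>k\<in>F. 2 * q k - ?S \<le> norm (b - q x *\<^sub>R w)"
    using insert.prems(3) sum_insert q_le_S unfolding w(2) \<rho>_def by fastforce+
  then obtain z where z: "\<forall>i\<in>F. norm (z i) = 1" "(\<Sum>i\<in>F. q i *\<^sub>R z i) = b - q x *\<^sub>R w"
    using insert.IH q_nonneg(1) by blast
  have "(\<Sum>i\<in>F. q i *\<^sub>R (z(x := w)) i) = b - q x *\<^sub>R w"
    using z(2) insert.hyps(2) by (metis (no_types, lifting) fun_upd_other sum.cong)
  then show ?case
    using z(1) w(1) insert.hyps by (intro exI[of _ "z(x := w)"]) auto
qed

lemma exists_unit_vectors_sum_eq_iff: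
  fixes b :: "'a::euclidean_space"
  assumes "2 \<le> DIM('a)" "finite I" "\<forall>i\<in>I. 0 \<le> q i"
  shows "(\<exists>z. (\<forall>i\<in>I. norm (z i) = 1) \<and> (\<Sum>i\<in>I. q i *\<^sub>R z i) = b) \<longleftrightarrow>
           norm b \<le> sum q I \<and> (\<forall>k\<in>I. 2 * q k - sum q I \<le> norm b)"
  using sum_unit_vectors_polygon_inequalities[OF assms(2,3)] exists_unit_vectors_sum_eq[OF assms]
  by blast

lemma exists_unit_cols_mult_eq_iff:
  "(\<exists>A :: real^'n^'m. unit_cols A \<and> A *v q = b) \<longleftrightarrow>
     (\<exists>z. (\<forall>i. norm (z i) = 1) \<and> (\<Sum>i\<in>UNIV. q $ i *\<^sub>R z i) = b)"
proof -
  have mult_eq: "A *v q = (\<Sum>i\<in>UNIV. q $ i *\<^sub>R column i A)" for A :: "real^'n^'m"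
    by (simp add: matrix_mult_sum scalar_mult_eq_scaleR)
  have column_eq: "column i (\<chi> r. \<chi> j. z j $ r) = z i" for z :: "'n \<Rightarrow> real^'m" and i
    by (simp add: column_def vec_eq_iff)
  show ?thesis
  proof
    assume "\<exists>A :: real^'n^'m. unit_cols A \<and> A *v q = b"
    then obtain A :: "real^'n^'m" where "unit_cols A" "A *v q = b"
      by blast
    then show "\<exists>z. (\<forall>i. norm (z i) = 1) \<and> (\<Sum>i\<in>UNIV. q $ i *\<^sub>R z i) = b"
      unfolding unit_cols_def mult_eq by (intro exI[of _ "\<lambda>i. column i A"]) simp
  next
    assume "\<exists>z. (\<forall>i. norm (z i) = 1) \<and> (\<Sum>i\<in>UNIV. q $ i *\<^sub>R z i) = b"
    then obtain z :: "'n \<Rightarrow> real^'m" where "\<forall>i. norm (z i) = 1" "(\<Sum>i\<in>UNIV. q $ i *\<^sub>R z i) = b"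
      by blast
    with column_eq show "\<exists>A :: real^'n^'m. unit_cols A \<and> A *v q = b"
      unfolding unit_cols_def mult_eq by (intro exI[of _ "\<chi> r. \<chi> j. z j $ r"]) simp
  qed
qed

lemma profit_eq_if_mult_eq:
  assumes "A *v q = \<beta>"
  shows "profit \<alpha> \<beta> \<gamma> A q i a x =
           \<alpha> * x * q $ i * (a \<bullet> column i A) - (1 + \<alpha>) * x\<^sup>2 + \<gamma> $ i * x"
proof -
  have "\<beta> = (\<Sum>j\<in>UNIV. q $ j *\<^sub>R column j A)"
    using assms by (simp add: matrix_mult_sum scalar_mult_eq_scaleR)
  then have "\<beta> - (\<Sum>j\<in>UNIV - {i}. q $ j *\<^sub>R column j A) = q $ i *\<^sub>R column i A"
    by (simp add: sum.remove[of UNIV i])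
  then show ?thesis
    unfolding profit_def by simp
qed

lemma is_equilibrium_if_mult_eq:
  fixes A :: "real^'n^'m"
  assumes "unit_cols A" "0 \<le> \<alpha>" "\<forall>i. 0 \<le> \<gamma> $ i"
    and "A *v q = \<beta>" and q: "q = (1 / (2 + \<alpha>)) *\<^sub>R \<gamma>"
  shows "is_equilibrium \<alpha> \<beta> \<gamma> A q"
  unfolding is_equilibrium_def
proof (intro conjI allI impI)
  have \<gamma>_eq: "\<gamma> $ i = (2 + \<alpha>) * q $ i" for i
    using assms(2) q by simp
  show q_nonneg: "0 \<le> q $ i" for i
    using assms(2,3) q by simp
  fix i and a :: "real^'m" and x :: real
  assume "norm a = 1" "0 \<le> x"
  let ?c = "column i A"
  have "norm ?c = 1"
    using assms(1) unfolding unit_cols_def by simp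
  then have "a \<bullet> ?c \<le> 1" "?c \<bullet> ?c = 1"
    using norm_cauchy_schwarz[of a ?c] \<open>norm a = 1\<close> by (simp_all add: dot_square_norm)
  have "\<alpha> * x * q $ i * (a \<bullet> ?c) \<le> \<alpha> * x * q $ i"
    using \<open>a \<bullet> ?c \<le> 1\<close> assms(2) \<open>0 \<le> x\<close> q_nonneg[of i]
    by (simp add: mult_left_le)
  moreover have "0 \<le> (1 + \<alpha>) * (x - q $ i)\<^sup>2"
    using assms(2) by simp
  ultimately show "profit \<alpha> \<beta> \<gamma> A q i a x \<le> profit \<alpha> \<beta> \<gamma> A q i ?c (q $ i)"
    unfolding profit_eq_if_mult_eq[OF assms(4)] \<gamma>_eq \<open>?c \<bullet> ?c = 1\<close>
    by (simp add: power2_eq_square algebra_simps)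
qed (use assms(1) in simp)

lemma R_norm_scaleR: "R_norm (c *\<^sub>R v) = \<bar>c\<bar> * R_norm v"
  by (simp add: R_norm_def abs_mult sum_distrib_left)

lemma r_fun_scaleR: "r_fun (c *\<^sub>R v) = \<bar>c\<bar> * r_fun v"
proof -
  have "mono (\<lambda>x. \<bar>c\<bar> * x :: real)"
    by (simp add: mono_def mult_left_mono)
  then have "\<bar>c\<bar> * Max (range (\<lambda>k. \<bar>v $ k\<bar>)) = Max (range (\<lambda>k. \<bar>c\<bar> * \<bar>v $ k\<bar>))"
    by (subst mono_Max_commute) (simp_all add: image_image)
  then show ?thesis
    by (simp add: r_fun_def R_norm_scaleR abs_mult algebra_simps)
qed

lemma r_fun_le_iff: "r_fun v \<le> c \<longleftrightarrow> (\<forall>k. 2 * \<bar>v $ k\<bar> - R_norm v \<le> c)"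
proof -
  have max_le: "Max (range (\<lambda>k. \<bar>v $ k\<bar>)) \<le> t \<longleftrightarrow> (\<forall>k. \<bar>v $ k\<bar> \<le> t)" for t
    by (simp add: Max_le_iff)
  show ?thesis
    unfolding r_fun_def using max_le[of "(c + R_norm v) / 2"] by (simp add: field_simps)
qed

theorem proposition3:
  fixes \<alpha> :: real and \<beta> :: "real^'m" and \<gamma> :: "real^'n"
  assumes "CARD('n) \<ge> 2" and "CARD('m) \<ge> 2"
    and "\<alpha> > 0" and "norm \<beta> = 1" and "\<forall>i. \<gamma> $ i > 0"
  shows "(\<exists>A :: real^'n^'m. is_equilibrium \<alpha> \<beta> \<gamma> A ((1 / (2 + \<alpha>)) *\<^sub>R \<gamma>)
             \<and> A *v ((1 / (2 + \<alpha>)) *\<^sub>R \<gamma>) = \<beta>)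
         \<longleftrightarrow> r_fun \<gamma> \<le> 2 + \<alpha> \<and> 2 + \<alpha> \<le> R_norm \<gamma>"
proof -
  define q where "q = (1 / (2 + \<alpha>)) *\<^sub>R \<gamma>"
  have \<gamma>_eq: "\<gamma> = (2 + \<alpha>) *\<^sub>R q"
    using assms(3) unfolding q_def by simp
  have q_pos: "0 < q $ i" for i
    using assms(3,5) unfolding q_def by simp
  have R_norm_q: "R_norm q = (\<Sum>i\<in>UNIV. q $ i)"
    using q_pos by (simp add: R_norm_def less_imp_le)
  have "(\<exists>A. is_equilibrium \<alpha> \<beta> \<gamma> A q \<and> A *v q = \<beta>) \<longleftrightarrow> (\<exists>A. unit_cols A \<and> A *v q = \<beta>)"
    using is_equilibrium_if_mult_eq[OF _ _ _ _ q_def] assms(3,5) is_equilibrium_def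
    by (metis less_imp_le)
  also have "\<dots> \<longleftrightarrow> (\<exists>z. (\<forall>i. norm (z i) = 1) \<and> (\<Sum>i\<in>UNIV. q $ i *\<^sub>R z i) = \<beta>)"
    by (rule exists_unit_cols_mult_eq_iff)
  also have "\<dots> \<longleftrightarrow> 1 \<le> R_norm q \<and> r_fun q \<le> 1"
    using exists_unit_vectors_sum_eq_iff[of UNIV "\<lambda>i. q $ i" \<beta>] assms(2,4) q_pos
    by (simp add: R_norm_q r_fun_le_iff abs_of_pos less_imp_le)
  also have "\<dots> \<longleftrightarrow> r_fun \<gamma> \<le> 2 + \<alpha> \<and> 2 + \<alpha> \<le> R_norm \<gamma>"
    using assms(3)
    by (auto simp: \<gamma>_eq R_norm_scaleR r_fun_scaleR mult_le_cancel_left1 mult_le_cancel_left2)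
  finally show ?thesis
    unfolding q_def .
qed

end
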